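(* Let $1\le k\le N-1$ satisfy $\phi^{k-1}-\phi^k>\phi^k-\phi^{k+1}$, let $F\in\tilde{\mathcal F}^k$, let $\mathcal U$ be an unlabeled atom of $\mathfrak A_k$, and let $\mathcal X$ be the vertex set of an arbitrary weakly connected component of the induced subgraph $F|_{\mathcal U}$. Then: (1) there is a forest $H\in\tilde{\mathcal F}^k$ such that the arcs leaving the vertices of $\mathcal X$ are the same in $F$ and $H$, and no arc of $H$ enters $\mathcal X$; (2) for every $G\in\tilde{\mathcal F}^k$ one has $\Upsilon^G_{\mathcal X}=\Upsilon^F_{\mathcal X}$; moreover, if the graph $F'=F^G_{\uparrow\mathcal X}$ is a forest (in particular, if no arc of $F$ enters $\mathcal X$), then $F'\in\tilde{\mathcal F}^k$; (3) if $G$ is any spanning forest of $V$ in which every vertex of $\mathcal X$ has an outgoing arc, then $\Upsilon^G_{\mathcal X}\ge\Upsilon^F_{\mathcal X}$; and if $\Upsilon^G_{\mathcal X}=\Upsilon^F_{\mathcal X}$, then there is $F'\in\tilde{\mathcal F}^k$ such that the arcs leaving the vertices of $\mathcal X$ in $G$ and in $F'$ coincide.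
   Context: $V$ is a digraph with vertex set $\mathcal N$, $|\mathcal N|=N$, real arc weights $v_{ij}$, having at least one spanning tree. An (entering) forest is a digraph in which every vertex has at most one outgoing arc and there is no directed cycle; its weakly connected components are trees, each with a root (the unique vertex with no outgoing arc). $\mathcal F^k$ is the set of spanning forests of $V$ with exactly $k$ trees. For a subgraph $G$ and $\mathcal S\subseteq\mathcal N$, $\Upsilon^G_{\mathcal S}=\sum v_{ij}$ over arcs $(i,j)$ of $G$ with $i\in\mathcal S$, and $\Upsilon^G=\Upsilon^G_{\mathcal N}$. $\phi^k=\min_{\mathcal F^k}\Upsilon^F$, $\phi^0=\infty$; $\tilde{\mathcal F}^k$ the forests in $\mathcal F^k$ of weight $\phi^k$. $\mathfrak A_k$ is the algebra of subsets of $\mathcal N$ generated by the vertex sets of trees of forests in $\tilde{\mathcal F}^k$; atoms are its minimal nonempty elements; an atom is unlabeled if it contains no root of any forest of $\tilde{\mathcal F}^k$. $F|_{\mathcal U}$ is the induced subgraph. An arc enters $\mathcal X$ if its head is in $\mathcal X$ and tail is not. $G^F_{\uparrow\mathcal S}$ is the graph obtained from $G$ by replacing the arcs leaving the vertices of $\mathcal S$ by the arcs leaving the same vertices in $F$ (so $F^G_{\uparrow\mathcal X}$ has the arcs of $G$ at vertices of $\mathcal X$ and those of $F$ elsewhere). *)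

theory Defs
  imports Complex_Main "HOL-Library.Extended_Real"
begin

text \<open>The digraph V: finite vertex set Nv, arc set E \<subseteq> Nv \<times> Nv, arc weights v i j.
  Subgraphs are represented by their arc sets (all vertices of Nv are kept).\<close>

definition is_digraph :: "'a set \<Rightarrow> ('a \<times> 'a) set \<Rightarrow> bool" where
  "is_digraph Nv E \<longleftrightarrow> finite Nv \<and> E \<subseteq> Nv \<times> Nv"

definition spanning_forest :: "('a \<times> 'a) set \<Rightarrow> ('a \<times> 'a) set \<Rightarrow> bool" where
  "spanning_forest E F \<longleftrightarrow> F \<subseteq> E \<and> (\<forall>i j j'. (i,j) \<in> F \<longrightarrow> (i,j') \<in> F \<longrightarrow> j = j') \<and> acyclic F"

definition roots :: "'a set \<Rightarrow> ('a \<times> 'a) set \<Rightarrow> 'a set" where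
  "roots Nv F = Nv - fst ` F"

definition wcomp :: "'a set \<Rightarrow> ('a \<times> 'a) set \<Rightarrow> 'a \<Rightarrow> 'a set" where
  "wcomp W G x = {y \<in> W. (x, y) \<in> (G \<union> G\<inverse>)\<^sup>*}"

text \<open>\<F>^k: spanning forests with exactly k trees (= k roots).\<close>
definition forests_k :: "'a set \<Rightarrow> ('a \<times> 'a) set \<Rightarrow> nat \<Rightarrow> ('a \<times> 'a) set set" where
  "forests_k Nv E k = {F. spanning_forest E F \<and> card (roots Nv F) = k}"

definition Ups :: "('a \<Rightarrow> 'a \<Rightarrow> real) \<Rightarrow> ('a \<times> 'a) set \<Rightarrow> 'a set \<Rightarrow> real" where
  "Ups v G S = (\<Sum>(i,j)\<in>{a \<in> G. fst a \<in> S}. v i j)"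

definition Ups_all :: "('a \<Rightarrow> 'a \<Rightarrow> real) \<Rightarrow> ('a \<times> 'a) set \<Rightarrow> real" where
  "Ups_all v G = (\<Sum>(i,j)\<in>G. v i j)"

definition phi :: "'a set \<Rightarrow> ('a \<times> 'a) set \<Rightarrow> ('a \<Rightarrow> 'a \<Rightarrow> real) \<Rightarrow> nat \<Rightarrow> ereal" where
  "phi Nv E v k = (if k = 0 then \<infinity> else ereal (Min (Ups_all v ` forests_k Nv E k)))"

definition min_forests :: "'a set \<Rightarrow> ('a \<times> 'a) set \<Rightarrow> ('a \<Rightarrow> 'a \<Rightarrow> real) \<Rightarrow> nat \<Rightarrow> ('a \<times> 'a) set set" where
  "min_forests Nv E v k = {F \<in> forests_k Nv E k. ereal (Ups_all v F) = phi Nv E v k}"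

inductive_set gen_algebra :: "'a set \<Rightarrow> 'a set set \<Rightarrow> 'a set set" for Nv Gs where
  gen: "A \<in> Gs \<Longrightarrow> A \<in> gen_algebra Nv Gs"
| empty: "{} \<in> gen_algebra Nv Gs"
| compl: "A \<in> gen_algebra Nv Gs \<Longrightarrow> Nv - A \<in> gen_algebra Nv Gs"
| union: "A \<in> gen_algebra Nv Gs \<Longrightarrow> B \<in> gen_algebra Nv Gs \<Longrightarrow> A \<union> B \<in> gen_algebra Nv Gs"

definition alg_k :: "'a set \<Rightarrow> ('a \<times> 'a) set \<Rightarrow> ('a \<Rightarrow> 'a \<Rightarrow> real) \<Rightarrow> nat \<Rightarrow> 'a set set" where
  "alg_k Nv E v k = gen_algebra Nv {wcomp Nv F x | F x. F \<in> min_forests Nv E v k \<and> x \<in> Nv}"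

definition is_atom :: "'a set set \<Rightarrow> 'a set \<Rightarrow> bool" where
  "is_atom Alg U \<longleftrightarrow> U \<in> Alg \<and> U \<noteq> {} \<and> (\<forall>W \<in> Alg. W \<subseteq> U \<longrightarrow> W = {} \<or> W = U)"

definition unlabeled_atom :: "'a set \<Rightarrow> ('a \<times> 'a) set \<Rightarrow> ('a \<Rightarrow> 'a \<Rightarrow> real) \<Rightarrow> nat \<Rightarrow> 'a set \<Rightarrow> bool" where
  "unlabeled_atom Nv E v k U \<longleftrightarrow> is_atom (alg_k Nv E v k) U \<and>
     (\<forall>H \<in> min_forests Nv E v k. U \<inter> roots Nv H = {})"

definition arcs_from :: "('a \<times> 'a) set \<Rightarrow> 'a set \<Rightarrow> ('a \<times> 'a) set" where
  "arcs_from G S = {a \<in> G. fst a \<in> S}"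

definition enters :: "('a \<times> 'a) set \<Rightarrow> 'a set \<Rightarrow> bool" where
  "enters G X \<longleftrightarrow> (\<exists>i j. (i,j) \<in> G \<and> j \<in> X \<and> i \<notin> X)"

text \<open>G^F_{\<up>S}: replace arcs of G leaving S by those of F leaving S.\<close>
definition replace_at :: "('a \<times> 'a) set \<Rightarrow> ('a \<times> 'a) set \<Rightarrow> 'a set \<Rightarrow> ('a \<times> 'a) set" where
  "replace_at G F S = arcs_from F S \<union> {a \<in> G. fst a \<notin> S}"

end

theory Submission
  imports Defs
begin

text \<open>
  The gap condition \<open>\<phi>(k - 1) + \<phi>(k + 1) > 2\<phi>(k)\<close> forces every tree of a minimal forest \<open>H\<close> to contain
  exactly one root of any other minimal forest \<open>F\<close>: otherwise exchanging the arcs of that tree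
  between \<open>F\<close> and \<open>H\<close> produces forests with \<open>k + 1\<close> and \<open>k - 1\<close> trees of total weight \<open>2\<phi>(k)\<close>.
  Consequently, exchanging the arcs of any union of trees of \<open>H\<close> between \<open>F\<close> and \<open>H\<close> preserves
  the number of trees, and since the two resulting weights add up to \<open>2\<phi>(k)\<close>, both forests stay
  minimal. An unlabeled atom \<open>U\<close> is the intersection of the trees through one of its vertices in
  all minimal forests; exchanging with each of them in turn yields a minimal forest with the arcs
  of \<open>F\<close> on \<open>U\<close> and no arc entering \<open>U\<close>, hence none entering any union \<open>Y\<close> of components
  of \<open>F|\<^sub>U\<close>. In such a forest the arcs leaving \<open>Y\<close> can be replaced by those of any forest \<open>G\<close>
  covering \<open>Y\<close> without creating a cycle or a root, which gives the local minimality (3).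
  Applying (3) to \<open>X\<close> and \<open>U - X\<close> for \<open>F\<close>, and to \<open>U\<close> for \<open>G\<close>, forces the equality in (2).
\<close>

section \<open>Trees of a forest\<close>

lemma spanning_forest_iff: "spanning_forest E F \<longleftrightarrow> F \<subseteq> E \<and> single_valued F \<and> acyclic F"
  unfolding spanning_forest_def single_valued_def by blast

definition tree_root :: "('a \<times> 'a) set \<Rightarrow> 'a \<Rightarrow> 'a" where
  "tree_root H z = (SOME r. (z, r) \<in> H\<^sup>* \<and> r \<notin> fst ` H)"

lemma ex_tree_root:
  assumes "finite H" "acyclic H"
  shows "\<exists>r. (z, r) \<in> H\<^sup>* \<and> r \<notin> fst ` H"
proof -
  obtain r where r: "(z, r) \<in> H\<^sup>*" and min: "\<And>s. (s, r) \<in> H\<inverse> \<Longrightarrow> (z, s) \<notin> H\<^sup>*"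
    using wfE_min[OF finite_acyclic_wf_converse[OF assms], of z "{w. (z, w) \<in> H\<^sup>*}"] by auto
  have "r \<notin> fst ` H"
  proof
    assume "r \<in> fst ` H"
    then obtain s where "(r, s) \<in> H" by force
    with r min show False by (meson converse_iff rtrancl.rtrancl_into_rtrancl)
  qed
  with r show ?thesis by blast
qed

lemma tree_root:
  assumes "finite H" "acyclic H"
  shows "(z, tree_root H z) \<in> H\<^sup>*" and "tree_root H z \<notin> fst ` H"
  using someI_ex[OF ex_tree_root[OF assms, of z]] unfolding tree_root_def by auto

lemma rtrancl_from_sink: "r \<notin> fst ` H \<Longrightarrow> (r, s) \<in> H\<^sup>* \<Longrightarrow> s = r"
  by (erule converse_rtranclE) force+

lemma tree_root_eqI:
  assumes "finite H" "single_valued H" "acyclic H" "(z, r) \<in> H\<^sup>*" "r \<notin> fst ` H"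
  shows "tree_root H z = r"
  using single_valued_confluent[OF assms(2) assms(4) tree_root(1)[OF assms(1,3)]]
    rtrancl_from_sink assms(5) tree_root(2)[OF assms(1,3)] by metis

lemma tree_root_rtrancl:
  assumes "finite H" "single_valued H" "acyclic H" "(a, b) \<in> H\<^sup>*"
  shows "tree_root H a = tree_root H b"
  using assms(4) tree_root[OF assms(1,3), of b]
  by (intro tree_root_eqI[OF assms(1-3)]) (auto intro: rtrancl_trans)

lemma tree_root_eq_iff:
  assumes "finite H" "single_valued H" "acyclic H"
  shows "tree_root H a = tree_root H b \<longleftrightarrow> (a, b) \<in> (H \<union> H\<inverse>)\<^sup>*"
proof
  have up: "(a, tree_root H a) \<in> (H \<union> H\<inverse>)\<^sup>*" for a
    using tree_root(1)[OF assms(1,3)] rtrancl_mono[of H "H \<union> H\<inverse>"] by blast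
  have "(tree_root H b, b) \<in> (H \<union> H\<inverse>)\<^sup>*"
    by (rule symD[OF sym_rtrancl[OF sym_Un_converse] up])
  then show "(a, b) \<in> (H \<union> H\<inverse>)\<^sup>*" if "tree_root H a = tree_root H b"
    using up[of a] that by (metis rtrancl_trans)
next
  show "tree_root H a = tree_root H b" if "(a, b) \<in> (H \<union> H\<inverse>)\<^sup>*"
    using that
  proof (induction rule: rtrancl_induct)
    case (step y z)
    then show ?case
      using tree_root_rtrancl[OF assms] by (metis UnE converse_iff r_into_rtrancl)
  qed simp
qed

section \<open>Exchanging arcs between forests\<close>

text \<open>\<open>saturated S H\<close>: \<open>S\<close> is a union of weakly connected components of \<open>H\<close>.\<close>

definition saturated :: "'a set \<Rightarrow> ('a \<times> 'a) set \<Rightarrow> bool" where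
  "saturated S H \<longleftrightarrow> (\<forall>(a, b) \<in> H. a \<in> S \<longleftrightarrow> b \<in> S)"

lemma saturated_iff_not_enters: "saturated S H \<longleftrightarrow> \<not> enters H S \<and> \<not> enters H (- S)"
  unfolding saturated_def enters_def by auto

lemma saturated_rtrancl:
  assumes "saturated S H" "(a, b) \<in> H\<^sup>*"
  shows "a \<in> S \<longleftrightarrow> b \<in> S"
  using assms(2) by (induction rule: rtrancl_induct) (use assms(1) in \<open>auto simp: saturated_def\<close>)

lemma saturated_Compl: "saturated (- S) H \<longleftrightarrow> saturated S H"
  unfolding saturated_def by blast

lemma saturated_Diff: "saturated A H \<Longrightarrow> saturated B H \<Longrightarrow> saturated (A - B) H"
  unfolding saturated_def by blast

lemma saturated_Int_Times: "saturated W (H \<inter> W \<times> W)"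
  unfolding saturated_def by blast

lemma saturated_wcomp: "saturated (wcomp W H z) (H \<inter> W \<times> W)"
  unfolding saturated_def wcomp_def
  by (blast intro: rtrancl_into_rtrancl)

lemma acyclic_if_not_enters:
  assumes "\<not> enters R C" "acyclic (R \<inter> C \<times> C)" "acyclic (R \<inter> (- C) \<times> (- C))"
  shows "acyclic R"
proof -
  have "(b \<in> C \<longrightarrow> (a, b) \<in> (R \<inter> C \<times> C)\<^sup>+) \<and> (a \<notin> C \<longrightarrow> b \<notin> C \<and> (a, b) \<in> (R \<inter> (- C) \<times> (- C))\<^sup>+)"
    if "(a, b) \<in> R\<^sup>+" for a b
    using that assms(1) unfolding enters_def
    by (induction rule: trancl_induct) (auto intro: trancl_into_trancl)
  with assms(2,3) show ?thesis
    unfolding acyclic_def by metis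
qed

lemma replace_at_eq: "replace_at F G S = arcs_from G S \<union> arcs_from F (- S)"
  unfolding replace_at_def arcs_from_def by auto

lemma replace_at_Compl: "replace_at F G S = replace_at G F (- S)"
  unfolding replace_at_eq by auto

lemma arcs_from_replace_at: "arcs_from (replace_at F G S) S = arcs_from G S"
  unfolding replace_at_eq arcs_from_def by auto

lemma acyclic_replace_at:
  assumes "acyclic F" "acyclic G" "\<not> enters F S"
  shows "acyclic (replace_at F G S)"
proof (rule acyclic_if_not_enters)
  show "\<not> enters (replace_at F G S) S"
    using assms(3) unfolding enters_def replace_at_eq arcs_from_def by auto
  show "acyclic (replace_at F G S \<inter> S \<times> S)"
    by (rule acyclic_subset[OF assms(2)]) (auto simp: replace_at_eq arcs_from_def)
  show "acyclic (replace_at F G S \<inter> (- S) \<times> (- S))"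
    by (rule acyclic_subset[OF assms(1)]) (auto simp: replace_at_eq arcs_from_def)
qed

lemma spanning_forest_replace_at:
  assumes "spanning_forest E F" "spanning_forest E G" "acyclic (replace_at F G S)"
  shows "spanning_forest E (replace_at F G S)"
  using assms unfolding spanning_forest_iff single_valued_def replace_at_eq arcs_from_def by auto

lemma spanning_forest_replace_at_not_enters:
  assumes "spanning_forest E F" "spanning_forest E G" "\<not> enters F S"
  shows "spanning_forest E (replace_at F G S)"
  using assms by (meson acyclic_replace_at spanning_forest_iff spanning_forest_replace_at)

lemma spanning_forest_exchange:
  assumes "spanning_forest E F" "spanning_forest E H" "saturated S H"
  shows "spanning_forest E (replace_at F H S)" "spanning_forest E (replace_at H F S)"
  using assms spanning_forest_replace_at_not_enters[of E H F]
  by (auto simp: saturated_iff_not_enters replace_at_Compl[of F H])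

lemma fst_replace_at: "fst ` replace_at F G S = (fst ` G \<inter> S) \<union> (fst ` F - S)"
  unfolding replace_at_eq arcs_from_def by (auto intro: rev_image_eqI)

lemma roots_replace_at: "roots Nv (replace_at F G S) = (roots Nv F - S) \<union> (roots Nv G \<inter> S)"
  unfolding roots_def fst_replace_at by blast

lemma card_roots_replace_at:
  "finite Nv \<Longrightarrow> card (roots Nv (replace_at F G S)) = card (roots Nv F - S) + card (roots Nv G \<inter> S)"
  unfolding roots_replace_at by (rule card_Un_disjoint) (auto simp: roots_def)

lemma roots_replace_at_eq: "S \<subseteq> fst ` F \<Longrightarrow> S \<subseteq> fst ` G \<Longrightarrow> roots Nv (replace_at F G S) = roots Nv F"
  unfolding roots_def fst_replace_at by blast

lemma Ups_eq_Ups_all: "Ups v G S = Ups_all v (arcs_from G S)"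
  unfolding Ups_def Ups_all_def arcs_from_def ..

lemma Ups_Un_disjoint: "finite G \<Longrightarrow> A \<inter> B = {} \<Longrightarrow> Ups v G (A \<union> B) = Ups v G A + Ups v G B"
  unfolding Ups_def by (subst sum.union_disjoint[symmetric]) (auto intro: sum.cong)

lemma Ups_all_split: "finite G \<Longrightarrow> Ups_all v G = Ups v G S + Ups v G (- S)"
  using Ups_Un_disjoint[of G S "- S" v] unfolding Ups_def Ups_all_def by simp

lemma Ups_all_replace_at:
  "finite F \<Longrightarrow> finite G \<Longrightarrow> Ups_all v (replace_at F G S) = Ups v G S + Ups v F (- S)"
  unfolding replace_at_eq Ups_eq_Ups_all Ups_all_def
  by (rule sum.union_disjoint) (auto simp: arcs_from_def)

lemma Ups_all_exchange:
  "finite F \<Longrightarrow> finite H \<Longrightarrow>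
    Ups_all v (replace_at F H S) + Ups_all v (replace_at H F S) = Ups_all v F + Ups_all v H"
  using Ups_all_replace_at[of F H v S] Ups_all_replace_at[of H F v S]
    Ups_all_split[of F v S] Ups_all_split[of H v S] by simp

section \<open>Atoms of a generated algebra\<close>

lemma gen_algebra_subset: "A \<in> gen_algebra Nv Gs \<Longrightarrow> \<forall>g\<in>Gs. g \<subseteq> Nv \<Longrightarrow> A \<subseteq> Nv"
  by (induction rule: gen_algebra.induct) auto

lemma gen_algebra_respects:
  "A \<in> gen_algebra Nv Gs \<Longrightarrow> y \<in> Nv \<Longrightarrow> z \<in> Nv \<Longrightarrow> \<forall>g\<in>Gs. y \<in> g \<longleftrightarrow> z \<in> g \<Longrightarrow> y \<in> A \<longleftrightarrow> z \<in> A"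
  by (induction rule: gen_algebra.induct) auto

lemma gen_algebra_Int:
  assumes "A \<in> gen_algebra Nv Gs" "B \<in> gen_algebra Nv Gs" "A \<subseteq> Nv"
  shows "A \<inter> B \<in> gen_algebra Nv Gs"
proof -
  have "A \<inter> B = Nv - ((Nv - A) \<union> (Nv - B))" using assms(3) by blast
  then show ?thesis using assms by (metis gen_algebra.compl gen_algebra.union)
qed

lemma atom_gen_algebra_eq:
  assumes atom: "is_atom (gen_algebra Nv Gs) U" and y: "y \<in> U" and Gs: "\<forall>g\<in>Gs. g \<subseteq> Nv"
  shows "U = {z \<in> Nv. \<forall>g\<in>Gs. z \<in> g \<longleftrightarrow> y \<in> g}"
proof -
  have U: "U \<in> gen_algebra Nv Gs" "U \<subseteq> Nv"
    using atom gen_algebra_subset Gs unfolding is_atom_def by auto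
  have "z \<in> g \<longleftrightarrow> y \<in> g" if "z \<in> U" "g \<in> Gs" for z g
  proof -
    have "U \<inter> g = {} \<or> U \<inter> g = U"
      using atom gen_algebra_Int[OF U(1) gen_algebra.gen[OF \<open>g \<in> Gs\<close>] U(2)]
      unfolding is_atom_def by blast
    then show ?thesis using that y by blast
  qed
  moreover have "z \<in> U" if "z \<in> Nv" "\<forall>g\<in>Gs. z \<in> g \<longleftrightarrow> y \<in> g" for z
    using gen_algebra_respects[OF U(1), of y z] y U(2) that by auto
  ultimately show ?thesis using U(2) by blast
qed

section \<open>Minimal forests and unlabeled atoms\<close>

lemma min_forests_spanning_forest: "F \<in> min_forests Nv E v k \<Longrightarrow> spanning_forest E F"
  and min_forests_card_roots: "F \<in> min_forests Nv E v k \<Longrightarrow> card (roots Nv F) = k"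
  unfolding min_forests_def forests_k_def by auto

locale finite_digraph =
  fixes Nv :: "'a set" and E :: "('a \<times> 'a) set"
  assumes digraph: "is_digraph Nv E"
begin

lemma finite_Nv: "finite Nv" and E_subset: "E \<subseteq> Nv \<times> Nv"
  using digraph unfolding is_digraph_def by auto

lemma spanning_forest_finite: "spanning_forest E H \<Longrightarrow> finite H"
  using E_subset finite_Nv unfolding spanning_forest_def by (metis finite_SigmaI finite_subset)

lemma finite_roots: "finite (roots Nv H)"
  unfolding roots_def using finite_Nv by blast

lemma tree_root_in_roots:
  assumes H: "spanning_forest E H" and z: "z \<in> Nv"
  shows "tree_root H z \<in> roots Nv H"
proof -
  have fin: "finite H" "acyclic H" using H spanning_forest_finite spanning_forest_iff by auto
  have "tree_root H z \<in> Nv"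
    using tree_root(1)[OF fin, of z] z H E_subset unfolding spanning_forest_def
    by (cases rule: rtranclE) auto
  with tree_root(2)[OF fin] show ?thesis unfolding roots_def by blast
qed

lemma tree_root_of_root: "spanning_forest E H \<Longrightarrow> r \<in> roots Nv H \<Longrightarrow> tree_root H r = r"
  by (rule tree_root_eqI) (auto simp: spanning_forest_iff spanning_forest_finite roots_def)

lemma wcomp_eq_tree_root:
  "spanning_forest E H \<Longrightarrow> wcomp Nv H z = {w \<in> Nv. tree_root H z = tree_root H w}"
  unfolding wcomp_def
  by (auto simp: tree_root_eq_iff spanning_forest_iff spanning_forest_finite)

lemma saturated_wcomp_forest:
  assumes "spanning_forest E H"
  shows "saturated (wcomp Nv H z) H"
proof -
  have "H \<inter> Nv \<times> Nv = H" using assms E_subset unfolding spanning_forest_def by blast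
  then show ?thesis using saturated_wcomp[of Nv H z] by simp
qed

lemma forests_k_0:
  assumes "Nv \<noteq> {}"
  shows "forests_k Nv E 0 = {}"
proof -
  obtain z where "z \<in> Nv" using assms by blast
  then have "roots Nv H \<noteq> {}" if "spanning_forest E H" for H
    using tree_root_in_roots[OF that] by blast
  then show ?thesis using finite_roots unfolding forests_k_def by auto
qed

lemma finite_forests_k: "finite (forests_k Nv E j)"
proof (rule finite_subset)
  show "forests_k Nv E j \<subseteq> Pow E" unfolding forests_k_def spanning_forest_def by auto
  show "finite (Pow E)" using finite_subset[OF E_subset] finite_Nv by blast
qed

lemma finite_min_forests: "finite (min_forests Nv E v k)"
  using finite_forests_k[of k] unfolding min_forests_def by auto

lemma phi_le: "j \<noteq> 0 \<Longrightarrow> P \<in> forests_k Nv E j \<Longrightarrow> phi Nv E v j \<le> ereal (Ups_all v P)"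
  using finite_forests_k unfolding phi_def by auto

lemma min_forests_le:
  assumes "k \<noteq> 0" "F \<in> min_forests Nv E v k" "P \<in> forests_k Nv E k"
  shows "Ups_all v F \<le> Ups_all v P"
proof -
  have "ereal (Ups_all v F) \<le> ereal (Ups_all v P)"
    using assms phi_le[of k P v] unfolding min_forests_def by simp
  then show ?thesis by simp
qed

lemma min_forestsI:
  assumes "k \<noteq> 0" "F \<in> min_forests Nv E v k" "P \<in> forests_k Nv E k" "Ups_all v P \<le> Ups_all v F"
  shows "P \<in> min_forests Nv E v k"
  using min_forests_le[OF assms(1-3)] assms(2-4) unfolding min_forests_def by auto

lemma min_forests_Ups_all_eq:
  assumes "F \<in> min_forests Nv E v k" "H \<in> min_forests Nv E v k"
  shows "Ups_all v F = Ups_all v H"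
proof -
  have "ereal (Ups_all v F) = ereal (Ups_all v H)" using assms unfolding min_forests_def by simp
  then show ?thesis by simp
qed

lemma replace_at_in_min_forests:
  assumes "k \<noteq> 0" and F: "F \<in> min_forests Nv E v k" and G: "spanning_forest E G"
    and FG: "spanning_forest E (replace_at F G Y)"
    and Y: "Y \<subseteq> fst ` F" "Y \<subseteq> fst ` G" and le: "Ups v G Y \<le> Ups v F Y"
  shows "replace_at F G Y \<in> min_forests Nv E v k"
proof (rule min_forestsI[OF assms(1,2)])
  have sF: "spanning_forest E F" using F by (rule min_forests_spanning_forest)
  show "replace_at F G Y \<in> forests_k Nv E k"
    using FG F roots_replace_at_eq[OF Y] unfolding min_forests_def forests_k_def by auto
  show "Ups_all v (replace_at F G Y) \<le> Ups_all v F"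
    using le Ups_all_replace_at[of F G v Y] Ups_all_split[of F v Y] spanning_forest_finite sF G
    by simp
qed

lemma Ups_le_if_not_enters:
  assumes "k \<noteq> 0" and P: "P \<in> min_forests Nv E v k" and "\<not> enters P Y" "Y \<subseteq> fst ` P"
    and G: "spanning_forest E G" "Y \<subseteq> fst ` G"
  shows "Ups v P Y \<le> Ups v G Y \<and> (Ups v G Y = Ups v P Y \<longrightarrow> replace_at P G Y \<in> min_forests Nv E v k)"
proof
  have sP: "spanning_forest E P" using P by (rule min_forests_spanning_forest)
  have Q: "spanning_forest E (replace_at P G Y)"
    by (rule spanning_forest_replace_at_not_enters[OF sP G(1) assms(3)])
  have "replace_at P G Y \<in> forests_k Nv E k"
    using Q P roots_replace_at_eq[OF assms(4) G(2)] unfolding min_forests_def forests_k_def by auto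
  from min_forests_le[OF assms(1) P this] show "Ups v P Y \<le> Ups v G Y"
    using Ups_all_replace_at[of P G v Y] Ups_all_split[of P v Y] spanning_forest_finite sP G(1)
    by simp
  show "Ups v G Y = Ups v P Y \<longrightarrow> replace_at P G Y \<in> min_forests Nv E v k"
    using replace_at_in_min_forests[OF assms(1) P G(1) Q assms(4) G(2)] by simp
qed

lemma unlabeled_atom_subset: "unlabeled_atom Nv E v k U \<Longrightarrow> U \<subseteq> Nv"
  using gen_algebra_subset[of U Nv] unfolding unlabeled_atom_def is_atom_def alg_k_def wcomp_def
  by blast

lemma unlabeled_atom_subset_fst:
  "unlabeled_atom Nv E v k U \<Longrightarrow> H \<in> min_forests Nv E v k \<Longrightarrow> U \<subseteq> fst ` H"
  using unlabeled_atom_subset[of v k U] unfolding unlabeled_atom_def roots_def by blast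

lemma wcomp_iff_same_trees:
  assumes "spanning_forest E H" "y \<in> Nv"
  shows "(\<forall>x\<in>Nv. z \<in> wcomp Nv H x \<longleftrightarrow> y \<in> wcomp Nv H x) \<longleftrightarrow> z \<in> wcomp Nv H y"
  using assms by (auto simp: wcomp_eq_tree_root)

lemma unlabeled_atom_eq:
  assumes U: "unlabeled_atom Nv E v k U" and y: "y \<in> U"
  shows "U = Nv \<inter> (\<Inter>H \<in> min_forests Nv E v k. wcomp Nv H y)"
proof -
  let ?Gs = "{wcomp Nv F x | F x. F \<in> min_forests Nv E v k \<and> x \<in> Nv}"
  have "U = {z \<in> Nv. \<forall>g\<in>?Gs. z \<in> g \<longleftrightarrow> y \<in> g}"
    by (rule atom_gen_algebra_eq)
      (use U y in \<open>auto simp: unlabeled_atom_def alg_k_def wcomp_def\<close>)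
  also have "\<dots> = {z \<in> Nv. \<forall>H \<in> min_forests Nv E v k. \<forall>x\<in>Nv. z \<in> wcomp Nv H x \<longleftrightarrow> y \<in> wcomp Nv H x}"
    by blast
  also have "\<dots> = Nv \<inter> (\<Inter>H \<in> min_forests Nv E v k. wcomp Nv H y)"
  proof -
    have "(\<forall>x\<in>Nv. z \<in> wcomp Nv H x \<longleftrightarrow> y \<in> wcomp Nv H x) \<longleftrightarrow> z \<in> wcomp Nv H y"
      if "H \<in> min_forests Nv E v k" for H z
      using wcomp_iff_same_trees min_forests_spanning_forest[OF that] unlabeled_atom_subset[OF U] y
      by blast
    then show ?thesis by blast
  qed
  finally show ?thesis .
qed

end

section \<open>Consequences of the gap condition\<close>

locale forest_gap = finite_digraph +
  fixes v :: "'a \<Rightarrow> 'a \<Rightarrow> real" and k :: nat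
  assumes k_pos: "k \<noteq> 0" and Nv_nonempty: "Nv \<noteq> {}"
    and gap: "phi Nv E v (k - 1) - phi Nv E v k > phi Nv E v k - phi Nv E v (k + 1)"
begin

abbreviation MF :: "('a \<times> 'a) set set" where
  "MF \<equiv> min_forests Nv E v k"

lemma Ups_all_sum_gt:
  assumes A: "A \<in> forests_k Nv E (k + 1)" and B: "B \<in> forests_k Nv E (k - 1)" and F: "F \<in> MF"
  shows "2 * Ups_all v F < Ups_all v A + Ups_all v B"
proof -
  have "k - 1 \<noteq> 0" using B forests_k_0[OF Nv_nonempty] by (metis empty_iff)
  then obtain a where a: "phi Nv E v (k - 1) = ereal a" "a \<le> Ups_all v B"
    using phi_le[OF _ B, of v] unfolding phi_def by auto
  obtain c where c: "phi Nv E v (k + 1) = ereal c" "c \<le> Ups_all v A"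
    using phi_le[OF _ A, of v] unfolding phi_def by auto
  have "phi Nv E v k = ereal (Ups_all v F)" using F unfolding min_forests_def by simp
  with gap a(1) c(1) have "a - Ups_all v F > Ups_all v F - c" by simp
  with a(2) c(2) show ?thesis by linarith
qed

lemma min_forest_tree_contains_root:
  assumes F: "F \<in> MF" and H: "H \<in> MF" and r': "r' \<in> roots Nv H"
  shows "\<exists>r \<in> roots Nv F. tree_root H r = r'"
proof (rule ccontr)
  assume none: "\<not> ?thesis"
  have sF: "spanning_forest E F" and sH: "spanning_forest E H"
    using F H by (auto intro: min_forests_spanning_forest)
  define T where "T = wcomp Nv H r'"
  have T: "saturated T H" unfolding T_def by (rule saturated_wcomp_forest[OF sH])
  have T_eq: "T = {w \<in> Nv. tree_root H w = r'}"
    unfolding T_def wcomp_eq_tree_root[OF sH] tree_root_of_root[OF sH r'] by auto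
  have F_T: "roots Nv F \<inter> T = {}" using none T_eq by auto
  have H_T: "roots Nv H \<inter> T = {r'}"
    using T_eq r' tree_root_of_root[OF sH] unfolding roots_def by auto
  have "card (roots Nv (replace_at F H T)) = k + 1"
    using card_roots_replace_at[OF finite_Nv, of F H T] F_T H_T min_forests_card_roots[OF F]
    by (simp add: Diff_triv)
  then have A: "replace_at F H T \<in> forests_k Nv E (k + 1)"
    using spanning_forest_exchange(1)[OF sF sH T] unfolding forests_k_def by simp
  have "card (roots Nv (replace_at H F T)) = k - 1"
    using card_roots_replace_at[OF finite_Nv, of H F T] F_T H_T min_forests_card_roots[OF H]
      card_Diff_subset_Int[of "roots Nv H" T] finite_roots
    by (simp add: Int_commute)
  then have B: "replace_at H F T \<in> forests_k Nv E (k - 1)"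
    using spanning_forest_exchange(2)[OF sF sH T] unfolding forests_k_def by simp
  have "Ups_all v (replace_at F H T) + Ups_all v (replace_at H F T) = 2 * Ups_all v F"
    using Ups_all_exchange[of F H v T] spanning_forest_finite sF sH min_forests_Ups_all_eq[OF F H]
    by simp
  with Ups_all_sum_gt[OF A B F] show False by simp
qed

lemma tree_root_bij_betw_roots:
  assumes F: "F \<in> MF" and H: "H \<in> MF"
  shows "bij_betw (tree_root H) (roots Nv F) (roots Nv H)"
proof -
  have sH: "spanning_forest E H" using H by (rule min_forests_spanning_forest)
  have image: "tree_root H ` roots Nv F = roots Nv H"
  proof
    show "tree_root H ` roots Nv F \<subseteq> roots Nv H"
      using tree_root_in_roots[OF sH] by (auto simp: roots_def)
    show "roots Nv H \<subseteq> tree_root H ` roots Nv F"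
      using min_forest_tree_contains_root[OF F H] by blast
  qed
  moreover have "inj_on (tree_root H) (roots Nv F)"
    by (rule eq_card_imp_inj_on[OF finite_roots])
      (simp add: image min_forests_card_roots[OF F] min_forests_card_roots[OF H])
  ultimately show ?thesis unfolding bij_betw_def by blast
qed

lemma card_roots_Int_saturated:
  assumes F: "F \<in> MF" and H: "H \<in> MF" and S: "saturated S H"
  shows "card (roots Nv F \<inter> S) = card (roots Nv H \<inter> S)"
proof -
  let ?rt = "tree_root H"
  have bij: "bij_betw ?rt (roots Nv F) (roots Nv H)" by (rule tree_root_bij_betw_roots[OF F H])
  have "finite H" "acyclic H"
    using min_forests_spanning_forest[OF H] spanning_forest_finite spanning_forest_iff by auto
  then have keep: "r \<in> S \<longleftrightarrow> ?rt r \<in> S" for r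
    by (rule saturated_rtrancl[OF S tree_root(1)])
  have "?rt ` (roots Nv F \<inter> S) = roots Nv H \<inter> S"
  proof
    show "?rt ` (roots Nv F \<inter> S) \<subseteq> roots Nv H \<inter> S"
      using bij_betw_imp_surj_on[OF bij] keep by blast
    show "roots Nv H \<inter> S \<subseteq> ?rt ` (roots Nv F \<inter> S)"
    proof
      fix r' assume r': "r' \<in> roots Nv H \<inter> S"
      then obtain r where "r \<in> roots Nv F" "?rt r = r'"
        using bij_betw_imp_surj_on[OF bij] by (metis IntD1 imageE)
      with r' keep show "r' \<in> ?rt ` (roots Nv F \<inter> S)" by blast
    qed
  qed
  moreover have "inj_on ?rt (roots Nv F \<inter> S)"
    using inj_on_subset[OF bij_betw_imp_inj_on[OF bij] Int_lower1] .
  ultimately show ?thesis by (metis card_image)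
qed

lemma replace_at_saturated_in_min_forests:
  assumes F: "F \<in> MF" and H: "H \<in> MF" and S: "saturated S H"
  shows "replace_at F H S \<in> MF"
proof -
  have sF: "spanning_forest E F" and sH: "spanning_forest E H"
    using F H by (auto intro: min_forests_spanning_forest)
  have card: "card (roots Nv F \<inter> S) = card (roots Nv H \<inter> S)"
    by (rule card_roots_Int_saturated[OF F H S])
  have A: "replace_at F H S \<in> forests_k Nv E k"
    using spanning_forest_exchange(1)[OF sF sH S] card_roots_replace_at[OF finite_Nv, of F H S]
      card_Int_Diff[OF finite_roots, of F S] card min_forests_card_roots[OF F]
    unfolding forests_k_def by simp
  have B: "replace_at H F S \<in> forests_k Nv E k"
    using spanning_forest_exchange(2)[OF sF sH S] card_roots_replace_at[OF finite_Nv, of H F S]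
      card_Int_Diff[OF finite_roots, of H S] card min_forests_card_roots[OF H]
    unfolding forests_k_def by simp
  show ?thesis
  proof (rule min_forestsI[OF k_pos F A])
    show "Ups_all v (replace_at F H S) \<le> Ups_all v F"
      using min_forests_le[OF k_pos H B] Ups_all_exchange[of F H v S]
        spanning_forest_finite sF sH min_forests_Ups_all_eq[OF F H]
      by simp
  qed
qed

lemma min_forest_not_entering_Inter:
  assumes "finite M" "M \<subseteq> MF" and F: "F \<in> MF" and T: "\<forall>H\<in>M. saturated (T H) H"
  shows "\<exists>P\<in>MF. arcs_from P (Nv \<inter> \<Inter>(T ` M)) \<subseteq> F \<and> \<not> enters P (Nv \<inter> \<Inter>(T ` M))"
  using assms(1,2) T
proof (induction M rule: finite_induct)
  case empty
  have "F \<subseteq> Nv \<times> Nv"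
    using min_forests_spanning_forest[OF F] E_subset unfolding spanning_forest_def by blast
  then show ?case using F unfolding enters_def arcs_from_def by auto
next
  case (insert H M)
  let ?C = "Nv \<inter> \<Inter>(T ` M)"
  obtain P where P: "P \<in> MF" "arcs_from P ?C \<subseteq> F" "\<not> enters P ?C"
    using insert by auto
  have H: "H \<in> MF" "saturated (T H) H" using insert.prems by auto
  \<comment> \<open>No arc of \<open>H\<close> enters \<open>T H\<close>, so taking the arcs of \<open>H\<close> outside \<open>T H\<close> creates no entry.\<close>
  define P' where "P' = replace_at P H (- T H)"
  have "P' \<in> MF" unfolding P'_def
    by (rule replace_at_saturated_in_min_forests[OF P(1) H(1)]) (simp add: saturated_Compl H(2))
  moreover have "Nv \<inter> \<Inter>(T ` insert H M) = ?C \<inter> T H" by auto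
  moreover have "arcs_from P' (?C \<inter> T H) \<subseteq> F"
    using P(2) unfolding P'_def replace_at_eq arcs_from_def by auto
  moreover have "\<not> enters P' (?C \<inter> T H)"
    using P(3) H(2) unfolding P'_def replace_at_eq arcs_from_def enters_def saturated_def by auto
  ultimately show ?case by metis
qed

lemma min_forest_not_entering_on_atom:
  assumes U: "unlabeled_atom Nv E v k U" and F: "F \<in> MF"
    and Y: "Y \<subseteq> U" "saturated Y (F \<inter> U \<times> U)"
  shows "\<exists>P\<in>MF. arcs_from P Y = arcs_from F Y \<and> \<not> enters P Y"
proof -
  obtain y where y: "y \<in> U" using U unfolding unlabeled_atom_def is_atom_def by blast
  have "\<forall>H\<in>MF. saturated (wcomp Nv H y) H"
    using saturated_wcomp_forest min_forests_spanning_forest by blast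
  moreover have "U = Nv \<inter> \<Inter>((\<lambda>H. wcomp Nv H y) ` MF)" by (rule unlabeled_atom_eq[OF U y])
  ultimately obtain P where P: "P \<in> MF" "arcs_from P U \<subseteq> F" "\<not> enters P U"
    using min_forest_not_entering_Inter[OF finite_min_forests subset_refl F] by metis
  have "arcs_from F Y \<subseteq> arcs_from P Y"
  proof
    fix e assume "e \<in> arcs_from F Y"
    then obtain a b where ab: "e = (a, b)" "(a, b) \<in> F" "a \<in> Y"
      unfolding arcs_from_def by (cases e) auto
    then obtain b' where "(a, b') \<in> P" using unlabeled_atom_subset_fst[OF U P(1)] Y(1) by force
    moreover from this have "(a, b') \<in> F" using P(2) ab(3) Y(1) unfolding arcs_from_def by force
    ultimately show "e \<in> arcs_from P Y"
      using ab min_forests_spanning_forest[OF F]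
      unfolding spanning_forest_def arcs_from_def by auto
  qed
  moreover have "arcs_from P Y \<subseteq> arcs_from F Y"
    using P(2) Y(1) unfolding arcs_from_def by auto
  moreover have "\<not> enters P Y"
  proof
    assume "enters P Y"
    then obtain a b where ab: "(a, b) \<in> P" "b \<in> Y" "a \<notin> Y" unfolding enters_def by blast
    show False
    proof (cases "a \<in> U")
      case True
      then have "(a, b) \<in> F \<inter> U \<times> U" using ab P(2) Y(1) unfolding arcs_from_def by auto
      then show False using Y(2) ab unfolding saturated_def by auto
    next
      case False
      then show False using P(3) ab Y(1) unfolding enters_def by auto
    qed
  qed
  ultimately show ?thesis using P(1) by blast
qed

lemma Ups_le_on_atom:
  assumes U: "unlabeled_atom Nv E v k U" and F: "F \<in> MF"
    and Y: "Y \<subseteq> U" "saturated Y (F \<inter> U \<times> U)"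
    and G: "spanning_forest E G" "Y \<subseteq> fst ` G"
  shows "Ups v F Y \<le> Ups v G Y \<and> (Ups v G Y = Ups v F Y \<longrightarrow> (\<exists>F'\<in>MF. arcs_from F' Y = arcs_from G Y))"
proof -
  obtain P where P: "P \<in> MF" "arcs_from P Y = arcs_from F Y" "\<not> enters P Y"
    using min_forest_not_entering_on_atom[OF U F Y] by blast
  have "Y \<subseteq> fst ` P" using unlabeled_atom_subset_fst[OF U P(1)] Y(1) by blast
  from Ups_le_if_not_enters[OF k_pos P(1,3) this G]
  have "Ups v P Y \<le> Ups v G Y \<and> (Ups v G Y = Ups v P Y \<longrightarrow> replace_at P G Y \<in> MF)" .
  moreover have "Ups v P Y = Ups v F Y" using P(2) by (simp add: Ups_eq_Ups_all)
  ultimately show ?thesis using arcs_from_replace_at by metis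
qed

lemma Ups_eq_on_atom:
  assumes U: "unlabeled_atom Nv E v k U" and F: "F \<in> MF" and G: "G \<in> MF"
    and Y: "Y \<subseteq> U" "saturated Y (F \<inter> U \<times> U)"
  shows "Ups v G Y = Ups v F Y"
proof -
  have sF: "spanning_forest E F" and sG: "spanning_forest E G"
    using F G by (auto intro: min_forests_spanning_forest)
  have UF: "U \<subseteq> fst ` F" and UG: "U \<subseteq> fst ` G"
    using unlabeled_atom_subset_fst[OF U] F G by auto
  have "Ups v F Y \<le> Ups v G Y"
    using Ups_le_on_atom[OF U F Y sG] Y(1) UG by blast
  moreover have "Ups v F (U - Y) \<le> Ups v G (U - Y)"
    using Ups_le_on_atom[OF U F _ saturated_Diff[OF saturated_Int_Times Y(2)] sG] UG by blast
  moreover have "Ups v G U \<le> Ups v F U"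
    using Ups_le_on_atom[OF U G subset_refl saturated_Int_Times sF UF] by blast
  moreover have "U = Y \<union> (U - Y)" "Y \<inter> (U - Y) = {}" using Y(1) by auto
  ultimately show ?thesis
    using Ups_Un_disjoint[of F Y "U - Y" v] Ups_Un_disjoint[of G Y "U - Y" v]
      spanning_forest_finite sF sG by simp
qed

end

theorem theorem3:
  fixes Nv :: "'a set" and E :: "('a \<times> 'a) set" and v :: "'a \<Rightarrow> 'a \<Rightarrow> real"
    and k :: nat and F :: "('a \<times> 'a) set" and U X :: "'a set" and x :: 'a
  assumes dg: "is_digraph Nv E"
    and tree: "forests_k Nv E 1 \<noteq> {}"
    and k: "1 \<le> k" "k \<le> card Nv - 1"
    and gap: "phi Nv E v (k - 1) - phi Nv E v k > phi Nv E v k - phi Nv E v (k + 1)"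
    and F: "F \<in> min_forests Nv E v k"
    and U: "unlabeled_atom Nv E v k U"
    and x: "x \<in> U"
    and X: "X = wcomp U (F \<inter> U \<times> U) x"
  shows
    "(\<exists>H \<in> min_forests Nv E v k. arcs_from H X = arcs_from F X \<and> \<not> enters H X)
     \<and> (\<forall>G \<in> min_forests Nv E v k.
          Ups v G X = Ups v F X
          \<and> (\<not> enters F X \<longrightarrow> spanning_forest E (replace_at F G X))
          \<and> (spanning_forest E (replace_at F G X) \<longrightarrow> replace_at F G X \<in> min_forests Nv E v k))
     \<and> (\<forall>G. spanning_forest E G \<and> X \<subseteq> fst ` G \<longrightarrow>
          Ups v G X \<ge> Ups v F X
          \<and> (Ups v G X = Ups v F X \<longrightarrow>
               (\<exists>F' \<in> min_forests Nv E v k. arcs_from F' X = arcs_from G X)))"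
proof -
  interpret forest_gap Nv E v k
    using dg k gap by unfold_locales auto
  have sF: "spanning_forest E F" using F by (rule min_forests_spanning_forest)
  have XU: "X \<subseteq> U" using X unfolding wcomp_def by blast
  have X_sat: "saturated X (F \<inter> U \<times> U)"
    using saturated_wcomp[of U "F \<inter> U \<times> U" x] unfolding X by (simp add: Int_assoc)
  have X_fst: "X \<subseteq> fst ` H" if "H \<in> MF" for H
    using unlabeled_atom_subset_fst[OF U that] XU by blast
  have "Ups v G X = Ups v F X
          \<and> (\<not> enters F X \<longrightarrow> spanning_forest E (replace_at F G X))
          \<and> (spanning_forest E (replace_at F G X) \<longrightarrow> replace_at F G X \<in> MF)" if G: "G \<in> MF" for G
    using Ups_eq_on_atom[OF U F G XU X_sat]
      spanning_forest_replace_at_not_enters[OF sF min_forests_spanning_forest[OF G]]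
      replace_at_in_min_forests[OF k_pos F min_forests_spanning_forest[OF G] _ X_fst[OF F] X_fst[OF G]]
    by simp
  then show ?thesis
    using min_forest_not_entering_on_atom[OF U F XU X_sat] Ups_le_on_atom[OF U F XU X_sat] by blast
qed

end
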